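(* Let $A_1,A_2,A_3$ be three distinct points lying on a gyrocircle with gyrocenter $O$ in the Einstein gyrovector space $\mathbb{R}^n_s$, $n\ge2$. Let $\theta=\angle A_1A_3A_2$ be the inscribed gyroangle and $2\phi=\angle A_1OA_2$ the gyrocentral gyroangle, both subtending the gyroarc $\widehat{A_1A_2}$. Let $\delta_{A_1A_2A_3}$ be the defect of gyrotriangle $A_1A_2A_3$ and $\delta_{A_1A_2O}$ the defect of gyrotriangle $A_1A_2O$. Then $$\sin\big(\theta+\tfrac12\delta_{A_1A_2A_3}\big)=\sin\big(\phi+\tfrac12\delta_{A_1A_2O}\big),$$ so that either $\theta+\tfrac12\delta_{A_1A_2A_3}=\phi+\tfrac12\delta_{A_1A_2O}$ or $\theta+\tfrac12\delta_{A_1A_2A_3}=\pi-(\phi+\tfrac12\delta_{A_1A_2O})$.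
   Context: Fix $s>0$, $n\ge2$; $\mathbb{R}^n_s=\{v\in\mathbb{R}^n:\|v\|<s\}$ with Einstein addition $u\oplus v=\frac{1}{1+u\cdot v/s^2}\{u+\frac{1}{\gamma_u}v+\frac{1}{s^2}\frac{\gamma_u}{1+\gamma_u}(u\cdot v)u\}$, $\gamma_v=(1-\|v\|^2/s^2)^{-1/2}$, $\ominus v=-v$. Gyrodistance between $A,B$: $\|\ominus A\oplus B\|$. Gyrolines/gyrosegments are intersections of Euclidean lines/segments with the ball. The gyroangle at vertex $A$ between gyrorays $AB,AC$ is $\alpha\in[0,\pi]$ with $\cos\alpha=\frac{(\ominus A\oplus B)\cdot(\ominus A\oplus C)}{\|\ominus A\oplus B\|\|\ominus A\oplus C\|}$. The defect of a gyrotriangle with gyroangles $\alpha_1,\alpha_2,\alpha_3$ is $\pi-\alpha_1-\alpha_2-\alpha_3$. The gyroplane of a gyrobarycentrically independent triple $\{A_1,A_2,A_3\}$ (i.e. $\ominus A_1\oplus A_2,\ominus A_1\oplus A_3$ linearly independent) is $(A_1\oplus\mathrm{span}\{\ominus A_1\oplus A_2,\ominus A_1\oplus A_3\})\cap\mathbb{R}^n_s$; a gyrocircle with gyrocenter $O$ and gyroradius $r$ is the set of points of a gyroplane containing $O$ at gyrodistance $r$ from $O$. *)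

theory Defs
  imports "HOL-Analysis.Analysis"
begin

definition gamma :: "real \<Rightarrow> 'a::real_inner \<Rightarrow> real" where
  "gamma s v = 1 / sqrt (1 - (norm v)\<^sup>2 / s\<^sup>2)"

definition eadd :: "real \<Rightarrow> 'a::real_inner \<Rightarrow> 'a \<Rightarrow> 'a" where
  "eadd s u v = (1 / (1 + (u \<bullet> v) / s\<^sup>2)) *\<^sub>R
      (u + (1 / gamma s u) *\<^sub>R v
         + ((1 / s\<^sup>2) * (gamma s u / (1 + gamma s u)) * (u \<bullet> v)) *\<^sub>R u)"

definition sball :: "real \<Rightarrow> 'a::real_normed_vector set" where
  "sball s = {v. norm v < s}"

definition gvec :: "real \<Rightarrow> 'a::real_inner \<Rightarrow> 'a \<Rightarrow> 'a" where
  "gvec s A B = eadd s (- A) B"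

definition gdist :: "real \<Rightarrow> 'a::real_inner \<Rightarrow> 'a \<Rightarrow> real" where
  "gdist s A B = norm (gvec s A B)"

definition gangle :: "real \<Rightarrow> 'a::real_inner \<Rightarrow> 'a \<Rightarrow> 'a \<Rightarrow> real" where
  "gangle s A B C = arccos ((gvec s A B \<bullet> gvec s A C) / (gdist s A B * gdist s A C))"

definition gdefect :: "real \<Rightarrow> 'a::real_inner \<Rightarrow> 'a \<Rightarrow> 'a \<Rightarrow> real" where
  "gdefect s A B C = pi - gangle s A B C - gangle s B A C - gangle s C A B"

definition gyro_indep :: "real \<Rightarrow> 'a::real_inner \<Rightarrow> 'a \<Rightarrow> 'a \<Rightarrow> bool" where
  "gyro_indep s A1 A2 A3 = (independent {gvec s A1 A2, gvec s A1 A3}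
      \<and> gvec s A1 A2 \<noteq> gvec s A1 A3)"

definition gyroplane :: "real \<Rightarrow> 'a::real_inner \<Rightarrow> 'a \<Rightarrow> 'a \<Rightarrow> 'a set" where
  "gyroplane s A1 A2 A3 =
     {eadd s A1 v | v. v \<in> span {gvec s A1 A2, gvec s A1 A3} \<and> v \<in> sball s} \<inter> sball s"

definition on_gyrocircle :: "real \<Rightarrow> 'a::real_inner \<Rightarrow> 'a set \<Rightarrow> bool" where
  "on_gyrocircle s C S = (\<exists>P1 P2 P3 r.
      P1 \<in> sball s \<and> P2 \<in> sball s \<and> P3 \<in> sball s \<and> gyro_indep s P1 P2 P3 \<and>
      C \<in> gyroplane s P1 P2 P3 \<and>
      S \<subseteq> {X \<in> gyroplane s P1 P2 P3. gdist s C X = r})"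

end

theory Submission
  imports Defs
begin

(* Write gamma_AB = gamma_A gamma_B (1 - A.B/s^2); it is the Lorentz factor of (-A) (+) B, and it is
   the Minkowski product of the lifts gamma_X (1, X) of A and B to the hyperboloid.  Gyroangles obey
   the hyperbolic law of cosines in these factors.  Clearing denominators in Einstein addition shows
   that the lifts of the points of a gyroplane span at most a 3-dimensional subspace, so for the
   gyrocenter O and the points A1, A2, A3 the 4x4 Gram matrix (gamma_XY) is singular.  Since
   gamma_OA1 = gamma_OA2 = gamma_OA3, its determinant factors, and its vanishing says that
   cos ((alpha1 + alpha2 - theta) / 2) = cos beta, where alpha1, alpha2, theta are the gyroangles of
   A1 A2 A3 at A1, A2, A3 and beta is the base gyroangle of the isosceles gyrotriangle A1 A2 O.
   As theta + delta/2 = pi/2 - (alpha1 + alpha2 - theta)/2 and phi + delta_O/2 = pi/2 - beta, the two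
   sides are equal or supplementary. *)

section \<open>Lorentz factors of gyrovectors\<close>

lemma gamma_pos:
  fixes v :: "'a::real_inner"
  assumes "0 < s" "norm v < s"
  shows "0 < gamma s v"
proof -
  have "(norm v)\<^sup>2 < s\<^sup>2" using assms by (simp add: power_strict_mono)
  then show ?thesis using assms by (simp add: gamma_def)
qed

lemma norm_sq_gamma:
  fixes v :: "'a::real_inner"
  assumes "0 < s" "norm v < s"
  shows "(norm v)\<^sup>2 = s\<^sup>2 * (1 - 1 / (gamma s v)\<^sup>2)"
proof -
  have "(norm v)\<^sup>2 < s\<^sup>2" using assms by (simp add: power_strict_mono)
  then show ?thesis using assms by (simp add: gamma_def power_divide field_simps)
qed

lemma inner_less_sq:
  fixes A B :: "'a::real_inner"
  assumes "0 < s" "norm A < s" "norm B < s"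
  shows "A \<bullet> B < s\<^sup>2"
proof -
  have "A \<bullet> B \<le> norm A * norm B" by (simp add: norm_cauchy_schwarz)
  also have "\<dots> < s * s" using assms by (simp add: mult_strict_mono')
  finally show ?thesis by (simp add: power2_eq_square)
qed

lemma gvec_expand:
  fixes A B :: "'a::real_inner"
  shows "gvec s A B = (1 / (1 - (A \<bullet> B) / s\<^sup>2)) *\<^sub>R
     ((1 / gamma s A) *\<^sub>R B + ((gamma s A / (1 + gamma s A)) * (A \<bullet> B) / s\<^sup>2 - 1) *\<^sub>R A)"
  by (simp add: gvec_def eadd_def gamma_def algebra_simps)

definition gyrogamma :: "real \<Rightarrow> 'a::real_inner \<Rightarrow> 'a \<Rightarrow> real" where
  "gyrogamma s A B = gamma s A * gamma s B * (1 - (A \<bullet> B) / s\<^sup>2)"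

lemma inner_gvec_gvec:
  fixes A B C :: "'a::real_inner"
  assumes s: "0 < s" and A: "norm A < s" and B: "norm B < s" and C: "norm C < s"
  shows "1 - (gvec s A B \<bullet> gvec s A C) / s\<^sup>2 = gyrogamma s B C / (gyrogamma s A B * gyrogamma s A C)"
proof -
  define a where "a = gamma s A"
  define m where "m = (A \<bullet> B) / s\<^sup>2"
  define n where "n = (A \<bullet> C) / s\<^sup>2"
  define k where "k = (B \<bullet> C) / s\<^sup>2"
  define u where "u = 1 / a"
  define t where "t = a / (1 + a)"
  define p where "p = 1 / (1 - m)"
  define q where "q = 1 / (1 - n)"
  have a: "0 < a" using gamma_pos[OF s A] by (simp add: a_def)
  have "m < 1" "n < 1" using inner_less_sq s A B C by (auto simp: m_def n_def)
  then have inv: "u * a = 1" "t * (1 + a) = a" "p * (1 - m) = 1" "q * (1 - n) = 1"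
    using a by (auto simp: u_def t_def p_def q_def)
  have inner: "A \<bullet> A = s\<^sup>2 * (1 - u\<^sup>2)" "A \<bullet> B = s\<^sup>2 * m" "A \<bullet> C = s\<^sup>2 * n" "B \<bullet> C = s\<^sup>2 * k"
    using norm_sq_gamma[OF s A] s
    by (simp_all add: a_def u_def m_def n_def k_def power2_norm_eq_inner power_divide)
  have gv: "gvec s A B = p *\<^sub>R (u *\<^sub>R B + (t * m - 1) *\<^sub>R A)"
      "gvec s A C = q *\<^sub>R (u *\<^sub>R C + (t * n - 1) *\<^sub>R A)"
    unfolding gvec_expand a_def m_def n_def u_def t_def p_def q_def by simp_all
  have "gvec s A B \<bullet> gvec s A C = s\<^sup>2 * p * q * (u\<^sup>2 * k + u * (t * n - 1) * m + (t * m - 1) * u * n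
      + (t * m - 1) * (t * n - 1) * (1 - u\<^sup>2))"
    unfolding gv by (simp add: inner_add_left inner_add_right inner_commute[of B A] inner_commute[of C A] inner
        algebra_simps power2_eq_square)
  also have "\<dots> = s\<^sup>2 * (1 - p * q * (1 - k) * u\<^sup>2)"
    using inv by algebra
  finally have "1 - (gvec s A B \<bullet> gvec s A C) / s\<^sup>2 = p * q * (1 - k) * u\<^sup>2"
    using s by simp
  also have "\<dots> = gyrogamma s B C / (gyrogamma s A B * gyrogamma s A C)"
  proof -
    have "gyrogamma s B C = gamma s B * gamma s C * (1 - k)" "gyrogamma s A B = a * gamma s B * (1 - m)"
      "gyrogamma s A C = a * gamma s C * (1 - n)"
      by (simp_all add: gyrogamma_def a_def k_def m_def n_def)
    then show ?thesis
      using a gamma_pos[OF s B] gamma_pos[OF s C] \<open>m < 1\<close> \<open>n < 1\<close>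
      by (simp add: u_def p_def q_def power2_eq_square)
  qed
  finally show ?thesis .
qed

lemma gyrogamma_commute: "gyrogamma s A B = gyrogamma s B A"
  by (simp add: gyrogamma_def inner_commute)

lemma gyrogamma_self:
  fixes A :: "'a::real_inner"
  assumes "0 < s" "norm A < s"
  shows "gyrogamma s A A = 1"
  using norm_sq_gamma[OF assms] gamma_pos[OF assms] assms(1)
  by (simp add: gyrogamma_def power2_norm_eq_inner[symmetric] field_simps power2_eq_square)

lemma gyrogamma_pos:
  fixes A B :: "'a::real_inner"
  assumes "0 < s" "norm A < s" "norm B < s"
  shows "0 < gyrogamma s A B"
  using gamma_pos[of s A] gamma_pos[of s B] inner_less_sq[of s A B] assms by (simp add: gyrogamma_def)

lemma norm_gvec_sq:
  fixes A B :: "'a::real_inner"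
  assumes s: "0 < s" and A: "norm A < s" and B: "norm B < s"
  shows "(norm (gvec s A B))\<^sup>2 = s\<^sup>2 * (1 - 1 / (gyrogamma s A B)\<^sup>2)"
  using inner_gvec_gvec[OF s A B B] gyrogamma_self[OF s B] s
  by (simp add: dot_square_norm field_simps power2_eq_square)

lemma gamma_gvec:
  fixes A B :: "'a::real_inner"
  assumes s: "0 < s" and A: "norm A < s" and B: "norm B < s"
  shows "gamma s (gvec s A B) = gyrogamma s A B"
  using norm_gvec_sq[OF assms] gyrogamma_pos[OF assms] s
  by (simp add: gamma_def real_sqrt_divide)

text \<open>The equality case of the reverse Cauchy-Schwarz inequality
  \<open>(s\<^sup>2 - A \<bullet> B)\<^sup>2 \<ge> (s\<^sup>2 - (norm A)\<^sup>2) * (s\<^sup>2 - (norm B)\<^sup>2)\<close> for vectors in the ball.\<close>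
lemma gyrogamma_eq_1_imp_eq:
  fixes A B :: "'a::real_inner"
  assumes s: "0 < s" and A: "norm A < s" and B: "norm B < s" and g: "gyrogamma s A B = 1"
  shows "A = B"
proof -
  have "gamma s A * gamma s B * (s\<^sup>2 - A \<bullet> B) = s\<^sup>2"
    using g s by (simp add: gyrogamma_def field_simps)
  moreover have "(gamma s A)\<^sup>2 * (s\<^sup>2 - (norm A)\<^sup>2) = s\<^sup>2"
    "(gamma s B)\<^sup>2 * (s\<^sup>2 - (norm B)\<^sup>2) = s\<^sup>2"
    using norm_sq_gamma[OF s A] norm_sq_gamma[OF s B] gamma_pos[OF s A] gamma_pos[OF s B]
    by (simp_all add: field_simps)
  ultimately have "(gamma s A * gamma s B)\<^sup>2 * (s\<^sup>2 - A \<bullet> B)\<^sup>2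
      = (gamma s A * gamma s B)\<^sup>2 * ((s\<^sup>2 - (norm A)\<^sup>2) * (s\<^sup>2 - (norm B)\<^sup>2))"
    by algebra
  then have "(s\<^sup>2 - A \<bullet> B)\<^sup>2 = (s\<^sup>2 - (norm A)\<^sup>2) * (s\<^sup>2 - (norm B)\<^sup>2)"
    using gamma_pos[OF s A] gamma_pos[OF s B] by simp
  moreover have "(s\<^sup>2 - norm A * norm B)\<^sup>2
      = (s\<^sup>2 - (norm A)\<^sup>2) * (s\<^sup>2 - (norm B)\<^sup>2) + s\<^sup>2 * (norm A - norm B)\<^sup>2"
    by (simp add: power2_eq_square algebra_simps)
  moreover have "(s\<^sup>2 - norm A * norm B)\<^sup>2 \<le> (s\<^sup>2 - A \<bullet> B)\<^sup>2"
  proof (rule power_mono)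
    show "0 \<le> s\<^sup>2 - norm A * norm B"
      using A B by (simp add: power2_eq_square mult_mono')
  qed (simp add: norm_cauchy_schwarz)
  ultimately have "s\<^sup>2 * (norm A - norm B)\<^sup>2 \<le> 0" by linarith
  then have "norm A = norm B" using s by (simp add: mult_le_0_iff)
  moreover have "0 \<le> s\<^sup>2 - A \<bullet> B" "0 \<le> s\<^sup>2 - (norm B)\<^sup>2"
    using inner_less_sq[OF s A B] inner_less_sq[OF s B B] by (simp_all add: dot_square_norm)
  moreover have "(s\<^sup>2 - A \<bullet> B)\<^sup>2 = (s\<^sup>2 - (norm B)\<^sup>2)\<^sup>2"
    using \<open>(s\<^sup>2 - A \<bullet> B)\<^sup>2 = _\<close> \<open>norm A = norm B\<close> by (simp add: power2_eq_square)
  ultimately have "s\<^sup>2 - A \<bullet> B = s\<^sup>2 - (norm B)\<^sup>2" using power2_eq_iff_nonneg by blast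
  then have "A \<bullet> B = norm A * norm B" using \<open>norm A = norm B\<close> by (simp add: power2_eq_square)
  then have "(norm (A - B))\<^sup>2 = 0"
    using \<open>norm A = norm B\<close> dot_norm_neg[of A B] by (simp add: power2_eq_square)
  then show ?thesis by simp
qed

lemma gyrogamma_ge_1:
  fixes A B :: "'a::real_inner"
  assumes s: "0 < s" and A: "norm A < s" and B: "norm B < s"
  shows "1 \<le> gyrogamma s A B"
proof -
  have g: "0 < gyrogamma s A B" by (rule gyrogamma_pos[OF s A B])
  have "0 \<le> (norm (gvec s A B))\<^sup>2" by simp
  then have "1 / (gyrogamma s A B)\<^sup>2 \<le> 1"
    using norm_gvec_sq[OF s A B] s by (simp add: zero_le_mult_iff)
  then have "1\<^sup>2 \<le> (gyrogamma s A B)\<^sup>2" using g by simp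
  then show ?thesis using g by (rule power2_le_imp_le[OF _ less_imp_le])
qed

lemma gyrogamma_gt_1:
  fixes A B :: "'a::real_inner"
  assumes s: "0 < s" and A: "norm A < s" and B: "norm B < s" and "A \<noteq> B"
  shows "1 < gyrogamma s A B"
proof -
  have "gyrogamma s A B \<noteq> 1" using gyrogamma_eq_1_imp_eq[OF s A B] \<open>A \<noteq> B\<close> by blast
  with gyrogamma_ge_1[OF s A B] show ?thesis by linarith
qed

lemma gyrogamma_eq_if_gdist_eq:
  fixes Z A B :: "'a::real_inner"
  assumes s: "0 < s" and Z: "norm Z < s" and A: "norm A < s" and B: "norm B < s"
    and "gdist s Z A = gdist s Z B"
  shows "gyrogamma s Z A = gyrogamma s Z B"
  using assms(5) unfolding gamma_gvec[OF s Z A, symmetric] gamma_gvec[OF s Z B, symmetric]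
  by (simp add: gamma_def gdist_def)

lemma gdist_gyrogamma:
  fixes A B :: "'a::real_inner"
  assumes s: "0 < s" and A: "norm A < s" and B: "norm B < s"
  shows "gdist s A B = s * sqrt ((gyrogamma s A B)\<^sup>2 - 1) / gyrogamma s A B"
proof -
  have g: "0 < gyrogamma s A B" by (rule gyrogamma_pos[OF s A B])
  have "gdist s A B = sqrt ((norm (gvec s A B))\<^sup>2)" by (simp add: gdist_def)
  also have "\<dots> = sqrt (s\<^sup>2 * (((gyrogamma s A B)\<^sup>2 - 1) / (gyrogamma s A B)\<^sup>2))"
    using norm_gvec_sq[OF s A B] g by (simp add: diff_divide_distrib)
  also have "\<dots> = s * sqrt ((gyrogamma s A B)\<^sup>2 - 1) / gyrogamma s A B"
    using s g by (simp add: real_sqrt_mult real_sqrt_divide)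
  finally show ?thesis .
qed

section \<open>Gyrotrigonometry\<close>

text \<open>\<open>gram3 x y z\<close> is the determinant of the Gram matrix \<open>[[1,x,y],[x,1,z],[y,z,1]]\<close>; \<open>gamma_cos\<close> is the
  hyperbolic law of cosines, with Lorentz factors in place of the hyperbolic cosines of the sides.\<close>
definition gram3 :: "real \<Rightarrow> real \<Rightarrow> real \<Rightarrow> real" where
  "gram3 x y z = 1 - x\<^sup>2 - y\<^sup>2 - z\<^sup>2 + 2 * x * y * z"

definition gamma_cos :: "real \<Rightarrow> real \<Rightarrow> real \<Rightarrow> real" where
  "gamma_cos x y z = (x * y - z) / (sqrt (x\<^sup>2 - 1) * sqrt (y\<^sup>2 - 1))"

lemma gram3_commute: "gram3 x z y = gram3 x y z" "gram3 y x z = gram3 x y z"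
  by (simp_all add: gram3_def algebra_simps)

lemma one_minus_gamma_cos_sq:
  assumes "1 < x" "1 < y"
  shows "1 - (gamma_cos x y z)\<^sup>2 = gram3 x y z / ((x\<^sup>2 - 1) * (y\<^sup>2 - 1))"
proof -
  define P where "P = (x\<^sup>2 - 1) * (y\<^sup>2 - 1)"
  have "1 < x\<^sup>2" "1 < y\<^sup>2" using assms by (simp_all add: one_less_power)
  then have "0 < P" "(gamma_cos x y z)\<^sup>2 = (x * y - z)\<^sup>2 / P"
    by (simp_all add: P_def gamma_cos_def power_divide power_mult_distrib)
  moreover have "gram3 x y z = P - (x * y - z)\<^sup>2"
    by (simp add: P_def gram3_def algebra_simps power2_eq_square)
  ultimately show ?thesis by (simp add: P_def[symmetric] field_simps)
qed

lemma abs_gamma_cos_le_1_iff: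
  assumes "1 < x" "1 < y"
  shows "\<bar>gamma_cos x y z\<bar> \<le> 1 \<longleftrightarrow> 0 \<le> gram3 x y z"
proof -
  have "1 < x\<^sup>2" "1 < y\<^sup>2" using assms by (simp_all add: one_less_power)
  then have "0 < (x\<^sup>2 - 1) * (y\<^sup>2 - 1)" by simp
  then have "0 \<le> 1 - (gamma_cos x y z)\<^sup>2 \<longleftrightarrow> 0 \<le> gram3 x y z"
    unfolding one_minus_gamma_cos_sq[OF assms] by (simp add: zero_le_divide_iff)
  then show ?thesis by (simp add: abs_square_le_1)
qed

lemma sin_arccos_gamma_cos:
  assumes "1 < x" "1 < y" "0 \<le> gram3 x y z"
  shows "sin (arccos (gamma_cos x y z)) = sqrt (gram3 x y z) / (sqrt (x\<^sup>2 - 1) * sqrt (y\<^sup>2 - 1))"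
proof -
  have "\<bar>gamma_cos x y z\<bar> \<le> 1" using abs_gamma_cos_le_1_iff assms by blast
  then have "sin (arccos (gamma_cos x y z)) = sqrt (1 - (gamma_cos x y z)\<^sup>2)"
    by (rule sin_arccos_abs)
  then show ?thesis unfolding one_minus_gamma_cos_sq[OF assms(1,2)]
    by (simp add: real_sqrt_divide real_sqrt_mult)
qed

lemma cos_arccos_gamma_cos:
  assumes "1 < x" "1 < y" "0 \<le> gram3 x y z"
  shows "cos (arccos (gamma_cos x y z)) = gamma_cos x y z"
  using abs_gamma_cos_le_1_iff[OF assms(1,2)] assms(3) cos_arccos_abs by blast

lemma inner_gvec_div_gdist:
  fixes A B C :: "'a::real_inner"
  assumes s: "0 < s" and A: "norm A < s" and B: "norm B < s" and C: "norm C < s"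
  shows "(gvec s A B \<bullet> gvec s A C) / (gdist s A B * gdist s A C)
    = gamma_cos (gyrogamma s A B) (gyrogamma s A C) (gyrogamma s B C)"
proof -
  define p where "p = gyrogamma s A B"
  define q where "q = gyrogamma s A C"
  define r where "r = gyrogamma s B C"
  have "0 < p" "0 < q" using gyrogamma_pos s A B C by (auto simp: p_def q_def)
  moreover have inner: "gvec s A B \<bullet> gvec s A C = s\<^sup>2 * (p * q - r) / (p * q)"
    using inner_gvec_gvec[OF s A B C] s \<open>0 < p\<close> \<open>0 < q\<close>
    by (simp add: p_def[symmetric] q_def[symmetric] r_def[symmetric] field_simps)
  ultimately show ?thesis
    using s unfolding inner gdist_gyrogamma[OF s A B] gdist_gyrogamma[OF s A C] gamma_cos_def
    by (cases "sqrt (p\<^sup>2 - 1) * sqrt (q\<^sup>2 - 1) = 0")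
       (auto simp: p_def[symmetric] q_def[symmetric] r_def[symmetric] field_simps power2_eq_square)
qed

lemma gangle_gamma_cos:
  fixes A B C :: "'a::real_inner"
  assumes "0 < s" "norm A < s" "norm B < s" "norm C < s"
  shows "gangle s A B C = arccos (gamma_cos (gyrogamma s A B) (gyrogamma s A C) (gyrogamma s B C))"
  unfolding gangle_def inner_gvec_div_gdist[OF assms] ..

lemma gram3_gyrogamma_nonneg:
  fixes A B C :: "'a::real_inner"
  assumes s: "0 < s" and A: "norm A < s" and B: "norm B < s" and C: "norm C < s"
    and "A \<noteq> B" "A \<noteq> C"
  shows "0 \<le> gram3 (gyrogamma s A B) (gyrogamma s A C) (gyrogamma s B C)"
proof -
  have "\<bar>gvec s A B \<bullet> gvec s A C\<bar> \<le> gdist s A B * gdist s A C"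
    unfolding gdist_def by (rule Cauchy_Schwarz_ineq2)
  then have "\<bar>(gvec s A B \<bullet> gvec s A C) / (gdist s A B * gdist s A C)\<bar> \<le> 1"
    by (cases "gdist s A B * gdist s A C = 0") (simp_all add: abs_divide divide_le_eq_1 gdist_def)
  then show ?thesis
    using abs_gamma_cos_le_1_iff gyrogamma_gt_1 assms unfolding inner_gvec_div_gdist[OF s A B C] by blast
qed

lemma arccos_gamma_cos_add_le_pi:
  assumes a: "1 < a" and b: "1 < b" and d: "1 < d" and D: "0 \<le> gram3 a b d"
  shows "arccos (gamma_cos a b d) + arccos (gamma_cos a d b) \<le> pi"
proof -
  define Sb where "Sb = sqrt (b\<^sup>2 - 1)"
  define Sd where "Sd = sqrt (d\<^sup>2 - 1)"
  have "1 < a\<^sup>2" "1 < b\<^sup>2" "1 < d\<^sup>2" using a b d by (simp_all add: one_less_power)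
  then have Sa: "0 < sqrt (a\<^sup>2 - 1)" and Sb: "0 < Sb" "Sb\<^sup>2 = b\<^sup>2 - 1" and Sd: "0 < Sd" "Sd\<^sup>2 = d\<^sup>2 - 1"
    by (simp_all add: Sb_def Sd_def)
  have "0 \<le> a - b * d + Sb * Sd"
  proof (rule ccontr)
    assume "\<not> ?thesis"
    moreover have "0 < Sb * Sd" using Sb Sd by simp
    moreover have "gram3 a b d = (a - b * d + Sb * Sd) * (b * d + Sb * Sd - a)"
      unfolding gram3_def using Sb(2) Sd(2) by algebra
    ultimately have "gram3 a b d < 0" by (simp add: mult_neg_pos)
    with D show False by simp
  qed
  moreover have "(a * b - d) * Sd + (a * d - b) * Sb = (b * Sd + d * Sb) * (a - b * d + Sb * Sd)"
    using Sb(2) Sd(2) by algebra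
  moreover have "0 < b * Sd + d * Sb" using b d Sb Sd by (simp add: add_pos_pos)
  ultimately have "0 \<le> ((a * b - d) * Sd + (a * d - b) * Sb) / (sqrt (a\<^sup>2 - 1) * Sb * Sd)"
    using Sa Sb Sd by simp
  also have "\<dots> = gamma_cos a b d + gamma_cos a d b"
    using Sa Sb Sd by (simp add: gamma_cos_def Sb_def[symmetric] Sd_def[symmetric] field_simps)
  finally have "- gamma_cos a d b \<le> gamma_cos a b d" by simp
  moreover have "\<bar>gamma_cos a b d\<bar> \<le> 1" "\<bar>gamma_cos a d b\<bar> \<le> 1"
    using abs_gamma_cos_le_1_iff a b d D by (simp_all add: gram3_commute)
  ultimately have "arccos (gamma_cos a b d) \<le> arccos (- gamma_cos a d b)"
    by (intro arccos_le_arccos) auto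
  also have "\<dots> = pi - arccos (gamma_cos a d b)"
    using \<open>\<bar>gamma_cos a d b\<bar> \<le> 1\<close> by (simp add: arccos_minus abs_le_iff)
  finally show ?thesis by simp
qed

lemma cos_add_diff_arccos_gamma_cos:
  assumes a: "1 < a" and b: "1 < b" and d: "1 < d" and D: "0 \<le> gram3 a b d"
  shows "cos (arccos (gamma_cos a b d) + arccos (gamma_cos a d b) - arccos (gamma_cos b d a))
    = ((a * b - d) * (a * d - b) * (b * d - a) + gram3 a b d * ((a * b - d) + (a * d - b) - (b * d - a)))
      / ((a\<^sup>2 - 1) * (b\<^sup>2 - 1) * (d\<^sup>2 - 1))"
proof -
  define Sa where "Sa = sqrt (a\<^sup>2 - 1)"
  define Sb where "Sb = sqrt (b\<^sup>2 - 1)"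
  define Sd where "Sd = sqrt (d\<^sup>2 - 1)"
  define R where "R = sqrt (gram3 a b d)"
  have "1 < a\<^sup>2" "1 < b\<^sup>2" "1 < d\<^sup>2" using a b d by (simp_all add: one_less_power)
  then have S: "0 < Sa" "0 < Sb" "0 < Sd" "Sa\<^sup>2 = a\<^sup>2 - 1" "Sb\<^sup>2 = b\<^sup>2 - 1" "Sd\<^sup>2 = d\<^sup>2 - 1"
    by (simp_all add: Sa_def Sb_def Sd_def)
  have D': "0 \<le> gram3 a d b" "0 \<le> gram3 b d a" using D by (simp_all add: gram3_commute)
  have "R\<^sup>2 = gram3 a b d" using D by (simp add: R_def)
  moreover have vals:
    "cos (arccos (gamma_cos a b d)) = (a * b - d) / (Sa * Sb)" "sin (arccos (gamma_cos a b d)) = R / (Sa * Sb)"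
    "cos (arccos (gamma_cos a d b)) = (a * d - b) / (Sa * Sd)" "sin (arccos (gamma_cos a d b)) = R / (Sa * Sd)"
    "cos (arccos (gamma_cos b d a)) = (b * d - a) / (Sb * Sd)" "sin (arccos (gamma_cos b d a)) = R / (Sb * Sd)"
    unfolding cos_arccos_gamma_cos[OF a b D] cos_arccos_gamma_cos[OF a d D'(1)] cos_arccos_gamma_cos[OF b d D'(2)]
      sin_arccos_gamma_cos[OF a b D] sin_arccos_gamma_cos[OF a d D'(1)] sin_arccos_gamma_cos[OF b d D'(2)]
    by (simp_all add: gamma_cos_def Sa_def Sb_def Sd_def R_def gram3_commute)
  moreover have "cos (arccos (gamma_cos a b d) + arccos (gamma_cos a d b) - arccos (gamma_cos b d a))
    = ((a * b - d) * (a * d - b) * (b * d - a) + R\<^sup>2 * ((a * b - d) + (a * d - b) - (b * d - a)))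
      / (Sa\<^sup>2 * Sb\<^sup>2 * Sd\<^sup>2)"
    unfolding cos_diff cos_add sin_add vals using S(1-3) by (simp add: field_simps power2_eq_square)
  ultimately show ?thesis unfolding S(4-6) by simp
qed

lemma gamma_cos_isosceles_sq:
  assumes a: "1 < a" and c: "1 < c"
  shows "(gamma_cos a c c)\<^sup>2 = c\<^sup>2 * (a - 1) / ((a + 1) * (c\<^sup>2 - 1))"
proof -
  have "1 < a\<^sup>2" "1 < c\<^sup>2" using a c by (simp_all add: one_less_power)
  then have "(gamma_cos a c c)\<^sup>2 = c\<^sup>2 * (a - 1)\<^sup>2 / ((a\<^sup>2 - 1) * (c\<^sup>2 - 1))"
    by (simp add: gamma_cos_def power_divide power_mult_distrib algebra_simps power2_eq_square)
  also have "\<dots> = c\<^sup>2 * (a - 1) / ((a + 1) * (c\<^sup>2 - 1))"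
  proof -
    have "(a\<^sup>2 - 1) * (c\<^sup>2 - 1) \<noteq> 0" using \<open>1 < a\<^sup>2\<close> \<open>1 < c\<^sup>2\<close> by simp
    moreover have "(a + 1) * (c\<^sup>2 - 1) \<noteq> 0" using a \<open>1 < c\<^sup>2\<close> by simp
    ultimately
    show ?thesis by (subst frac_eq_eq) (simp_all add: power2_eq_square algebra_simps)
  qed
  finally show ?thesis .
qed

lemma abs_arccos_gamma_cos_add_diff_le_pi:
  assumes a: "1 < a" and b: "1 < b" and d: "1 < d" and D: "0 \<le> gram3 a b d"
  shows "\<bar>arccos (gamma_cos a b d) + arccos (gamma_cos a d b) - arccos (gamma_cos b d a)\<bar> \<le> pi"
proof -
  have "\<bar>gamma_cos a b d\<bar> \<le> 1" "\<bar>gamma_cos a d b\<bar> \<le> 1" "\<bar>gamma_cos b d a\<bar> \<le> 1"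
    using abs_gamma_cos_le_1_iff a b d D by (simp_all add: gram3_commute)
  then have "0 \<le> arccos (gamma_cos a b d)" "0 \<le> arccos (gamma_cos a d b)"
    "0 \<le> arccos (gamma_cos b d a)" "arccos (gamma_cos b d a) \<le> pi"
    by (simp_all add: arccos_lbound arccos_ubound abs_le_iff)
  then show ?thesis using arccos_gamma_cos_add_le_pi[OF a b d D] by linarith
qed

text \<open>The determinant of \<open>[[1,c,c,c],[c,1,a,b],[c,a,1,d],[c,b,d,1]]\<close>, computed as a Schur complement.\<close>
definition gram4 :: "real \<Rightarrow> real \<Rightarrow> real \<Rightarrow> real \<Rightarrow> real" where
  "gram4 c a b d = gram3 a b d - c\<^sup>2 * (3 - a\<^sup>2 - b\<^sup>2 - d\<^sup>2 + 2 * (a * b + a * d + b * d) - 2 * (a + b + d))"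

lemma gram4_eq_0_imp_angle_relation:
  assumes a: "1 < a" and b: "1 < b" and c: "1 < c" and d: "1 < d"
    and D: "0 \<le> gram3 a b d" and G: "gram4 c a b d = 0"
  shows "\<bar>arccos (gamma_cos a b d) + arccos (gamma_cos a d b) - arccos (gamma_cos b d a)\<bar>
    = 2 * arccos (gamma_cos a c c)"
proof -
  define p where "p = (arccos (gamma_cos a b d) + arccos (gamma_cos a d b) - arccos (gamma_cos b d a)) / 2"
  define M where "M = (a\<^sup>2 - 1) * (b\<^sup>2 - 1) * (d\<^sup>2 - 1)"
  define N where
    "N = (a * b - d) * (a * d - b) * (b * d - a) + gram3 a b d * ((a * b - d) + (a * d - b) - (b * d - a))"
  have "1 < a\<^sup>2" "1 < b\<^sup>2" "1 < c\<^sup>2" "1 < d\<^sup>2" using a b c d by (simp_all add: one_less_power)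
  then have M: "0 < M" and ac: "0 < (a + 1) * (c\<^sup>2 - 1)" using a by (simp_all add: M_def)
  \<comment> \<open>Up to a nonzero factor, \<open>gram4 c a b d\<close> is the difference of \<open>(M + N) / (2 * M) = (cos p)\<^sup>2\<close> and the
    squared cosine of the base angle.\<close>
  have rel: "(M + N) * ((a + 1) * (c\<^sup>2 - 1)) - 2 * (c\<^sup>2 * (a - 1)) * M
      = - (a\<^sup>2 - 1) * (b + 1) * (d + 1) * gram4 c a b d"
    unfolding M_def N_def gram4_def gram3_def by algebra
  have "2 * p = arccos (gamma_cos a b d) + arccos (gamma_cos a d b) - arccos (gamma_cos b d a)"
    by (simp add: p_def)
  then have cos_2p: "cos (2 * p) = N / M"
    unfolding M_def N_def by (simp only: cos_add_diff_arccos_gamma_cos[OF a b d D])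
  have "(cos p)\<^sup>2 = (1 + cos (2 * p)) / 2" by (simp add: cos_double_cos)
  also have "\<dots> = (M + N) / (2 * M)" unfolding cos_2p using M by (simp add: field_simps)
  also have "\<dots> = (gamma_cos a c c)\<^sup>2"
    using M ac rel G by (simp add: gamma_cos_isosceles_sq[OF a c] frac_eq_eq algebra_simps)
  finally have cos_p: "(cos p)\<^sup>2 = (gamma_cos a c c)\<^sup>2" .
  have p: "\<bar>p\<bar> \<le> pi / 2" using abs_arccos_gamma_cos_add_diff_le_pi[OF a b d D] by (simp add: p_def)
  have "0 \<le> gamma_cos a c c" using a c by (simp add: gamma_cos_def)
  moreover have "0 \<le> cos p" using p by (intro cos_ge_zero) (simp_all add: abs_le_iff)
  ultimately have "cos \<bar>p\<bar> = gamma_cos a c c"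
    using power2_eq_iff_nonneg cos_p by (metis cos_abs_real)
  moreover have "arccos (cos \<bar>p\<bar>) = \<bar>p\<bar>" using p by (intro arccos_cos) auto
  ultimately have "arccos (gamma_cos a c c) = \<bar>p\<bar>" by simp
  then show ?thesis by (simp add: p_def)
qed

section \<open>Gyrocircles and the Gram determinant\<close>

text \<open>\<open>gyrogamma s X Y\<close> is the Minkowski product \<open>t * u - (x \<bullet> y) / s\<^sup>2\<close> of the lifts \<open>(t, x)\<close> and
  \<open>(u, y)\<close> of \<open>X\<close> and \<open>Y\<close>, hence linear in the lift of \<open>X\<close>.\<close>
definition hyperboloid_lift :: "real \<Rightarrow> 'a::real_inner \<Rightarrow> real \<times> 'a" where
  "hyperboloid_lift s X = (gamma s X, gamma s X *\<^sub>R X)"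

lemma hyperboloid_lift_gyroplane_span:
  fixes P1 P2 P3 :: "'a::real_inner"
  assumes s: "0 < s" and P1: "norm P1 < s"
  shows "\<exists>T. finite T \<and> card T \<le> 3 \<and> hyperboloid_lift s ` gyroplane s P1 P2 P3 \<subseteq> span T"
proof -
  define L where "L v = ((P1 \<bullet> v) / s\<^sup>2,
    (1 / gamma s P1) *\<^sub>R v + ((1 / s\<^sup>2) * (gamma s P1 / (1 + gamma s P1)) * (P1 \<bullet> v)) *\<^sub>R P1)" for v
  have "linear L"
    by (rule linearI) (simp_all add: L_def inner_add_right algebra_simps add_divide_distrib)
  define T where "T = {(1, P1), L (gvec s P1 P2), L (gvec s P1 P3)}"
  have "hyperboloid_lift s X \<in> span T" if in_plane: "X \<in> gyroplane s P1 P2 P3" for X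
  proof -
    obtain v where v: "v \<in> span {gvec s P1 P2, gvec s P1 P3}" "norm v < s" and X: "X = eadd s P1 v"
      using in_plane unfolding gyroplane_def sball_def by blast
    \<comment> \<open>Clearing the denominator \<open>t\<close> of \<open>eadd s P1 v\<close> leaves an affine function of \<open>v\<close>.\<close>
    define t where "t = 1 + (P1 \<bullet> v) / s\<^sup>2"
    have "0 < t" using inner_less_sq[OF s P1, of "- v"] v(2) s by (simp add: t_def field_simps)
    then have "(t, t *\<^sub>R X) = (1, P1) + L v"
      by (simp add: X eadd_def L_def t_def)
    moreover have "L v \<in> span T"
    proof -
      have "L v \<in> span (L ` {gvec s P1 P2, gvec s P1 P3})"
        using v(1) span_linear_image[OF \<open>linear L\<close>] by blast
      also have "\<dots> \<subseteq> span T" by (intro span_mono) (auto simp: T_def)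
      finally show ?thesis .
    qed
    ultimately have "(t, t *\<^sub>R X) \<in> span T" by (simp add: span_add span_base T_def)
    then have "(gamma s X / t) *\<^sub>R (t, t *\<^sub>R X) \<in> span T" by (rule span_mul)
    then show ?thesis using \<open>0 < t\<close> by (simp add: hyperboloid_lift_def)
  qed
  moreover have "card T \<le> 3" by (simp add: T_def card_insert_if)
  ultimately show ?thesis by (intro exI[of _ T]) (auto simp: T_def)
qed

lemma norm_less_if_mem_gyroplane: "X \<in> gyroplane s P1 P2 P3 \<Longrightarrow> norm X < s"
  by (simp add: gyroplane_def sball_def)

lemma gyroplane_gyrogamma_dependent:
  fixes P1 P2 P3 :: "'a::real_inner"
  assumes s: "0 < s" and P1: "norm P1 < s"
    and S: "finite S" "3 < card S" "S \<subseteq> gyroplane s P1 P2 P3"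
  shows "\<exists>l. (\<exists>X\<in>S. l X \<noteq> 0) \<and> (\<forall>Y. (\<Sum>X\<in>S. l X * gyrogamma s X Y) = 0)"
proof -
  obtain T where T: "finite T" "card T \<le> 3" "hyperboloid_lift s ` gyroplane s P1 P2 P3 \<subseteq> span T"
    using hyperboloid_lift_gyroplane_span[OF s P1] by blast
  have "inj_on (hyperboloid_lift s) S"
  proof (rule inj_onI)
    fix X Y assume "X \<in> S" "Y \<in> S" "hyperboloid_lift s X = hyperboloid_lift s Y"
    moreover have "0 < gamma s Y"
      using gamma_pos[OF s norm_less_if_mem_gyroplane] S(3) \<open>Y \<in> S\<close> by blast
    ultimately show "X = Y" by (auto simp: hyperboloid_lift_def)
  qed
  then have card: "card (hyperboloid_lift s ` S) = card S" by (rule card_image)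
  have "dependent (hyperboloid_lift s ` S)"
  proof (rule ccontr)
    assume "independent (hyperboloid_lift s ` S)"
    then have "card (hyperboloid_lift s ` S) \<le> card T"
      using independent_span_bound[OF T(1)] T(3) S(3) by blast
    with card T(2) S(2) show False by simp
  qed
  then obtain u where u: "\<exists>v\<in>hyperboloid_lift s ` S. u v \<noteq> 0"
      "(\<Sum>v\<in>hyperboloid_lift s ` S. u v *\<^sub>R v) = 0"
    using dependent_finite[of "hyperboloid_lift s ` S"] S(1) by auto
  define l where "l X = u (hyperboloid_lift s X)" for X
  have "(\<Sum>X\<in>S. l X *\<^sub>R hyperboloid_lift s X) = 0"
    using u(2) by (simp add: sum.reindex[OF \<open>inj_on _ S\<close>] l_def)
  then have sum0: "(\<Sum>X\<in>S. l X * gamma s X) = 0" "(\<Sum>X\<in>S. (l X * gamma s X) *\<^sub>R X) = 0"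
    using fst_sum[of "\<lambda>X. l X *\<^sub>R hyperboloid_lift s X" S]
      snd_sum[of "\<lambda>X. l X *\<^sub>R hyperboloid_lift s X" S]
    by (simp_all add: hyperboloid_lift_def)
  have "(\<Sum>X\<in>S. l X * gyrogamma s X Y) = 0" for Y
  proof -
    have "(\<Sum>X\<in>S. l X * gyrogamma s X Y)
        = gamma s Y * (\<Sum>X\<in>S. l X * gamma s X)
          - ((\<Sum>X\<in>S. (l X * gamma s X) *\<^sub>R X) \<bullet> Y) * gamma s Y / s\<^sup>2"
      by (simp add: gyrogamma_def inner_sum_left sum_distrib_left sum_distrib_right sum_divide_distrib
          sum_subtractf[symmetric] algebra_simps)
    then show ?thesis by (simp add: sum0)
  qed
  moreover have "\<exists>X\<in>S. l X \<noteq> 0" using u(1) by (auto simp: l_def)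
  ultimately show ?thesis by blast
qed

lemma gram4_eq_0_if_nontrivial_kernel:
  fixes l0 l1 l2 l3 a b c d :: real
  assumes "l0 + l1 * c + l2 * c + l3 * c = 0"
    and "l0 * c + l1 + l2 * a + l3 * b = 0"
    and "l0 * c + l1 * a + l2 + l3 * d = 0"
    and "l0 * c + l1 * b + l2 * d + l3 = 0"
    and "l0 \<noteq> 0 \<or> l1 \<noteq> 0 \<or> l2 \<noteq> 0 \<or> l3 \<noteq> 0"
  shows "gram4 c a b d = 0"
proof -
  have "gram4 c a b d * l0 = 0" "gram4 c a b d * l1 = 0" "gram4 c a b d * l2 = 0" "gram4 c a b d * l3 = 0"
    unfolding gram4_def gram3_def using assms(1-4) by algebra+
  with assms(5) show ?thesis by auto
qed

lemma gyroplane_gram4_eq_0: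
  fixes Oc A1 A2 A3 :: "'a::real_inner"
  assumes s: "0 < s" and P1: "norm P1 < s" and plane: "{Oc, A1, A2, A3} \<subseteq> gyroplane s P1 P2 P3"
    and distinct: "distinct [Oc, A1, A2, A3]"
    and c2: "gyrogamma s Oc A2 = gyrogamma s Oc A1" and c3: "gyrogamma s Oc A3 = gyrogamma s Oc A1"
  shows "gram4 (gyrogamma s Oc A1) (gyrogamma s A1 A2) (gyrogamma s A1 A3) (gyrogamma s A2 A3) = 0"
proof -
  define a where "a = gyrogamma s A1 A2"
  define b where "b = gyrogamma s A1 A3"
  define c where "c = gyrogamma s Oc A1"
  define d where "d = gyrogamma s A2 A3"
  have "norm Oc < s" "norm A1 < s" "norm A2 < s" "norm A3 < s"
    using plane norm_less_if_mem_gyroplane by auto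
  then have gg: "gyrogamma s Oc Oc = 1" "gyrogamma s A1 A1 = 1" "gyrogamma s A2 A2 = 1" "gyrogamma s A3 A3 = 1"
    "gyrogamma s Oc A1 = c" "gyrogamma s Oc A2 = c" "gyrogamma s Oc A3 = c"
    "gyrogamma s A1 Oc = c" "gyrogamma s A2 Oc = c" "gyrogamma s A3 Oc = c"
    "gyrogamma s A1 A2 = a" "gyrogamma s A2 A1 = a" "gyrogamma s A1 A3 = b" "gyrogamma s A3 A1 = b"
    "gyrogamma s A2 A3 = d" "gyrogamma s A3 A2 = d"
    using gyrogamma_self[OF s] c2 c3
      gyrogamma_commute[of s A1 Oc] gyrogamma_commute[of s A2 Oc] gyrogamma_commute[of s A3 Oc]
      gyrogamma_commute[of s A2 A1] gyrogamma_commute[of s A3 A1] gyrogamma_commute[of s A3 A2]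
    by (auto simp: a_def b_def c_def d_def)
  obtain l where l: "\<exists>X\<in>{Oc, A1, A2, A3}. l X \<noteq> 0"
      "\<And>Y. (\<Sum>X\<in>{Oc, A1, A2, A3}. l X * gyrogamma s X Y) = 0"
    using gyroplane_gyrogamma_dependent[OF s P1 _ _ plane] distinct by auto
  have lin: "l Oc * gyrogamma s Oc Y + l A1 * gyrogamma s A1 Y + l A2 * gyrogamma s A2 Y
      + l A3 * gyrogamma s A3 Y = 0" for Y
    using l(2)[of Y] distinct by (simp add: algebra_simps)
  have "l Oc + l A1 * c + l A2 * c + l A3 * c = 0" "l Oc * c + l A1 + l A2 * a + l A3 * b = 0"
    "l Oc * c + l A1 * a + l A2 + l A3 * d = 0" "l Oc * c + l A1 * b + l A2 * d + l A3 = 0"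
    using lin[of Oc] lin[of A1] lin[of A2] lin[of A3] by (simp_all add: gg)
  moreover have "l Oc \<noteq> 0 \<or> l A1 \<noteq> 0 \<or> l A2 \<noteq> 0 \<or> l A3 \<noteq> 0" using l(1) by auto
  ultimately have "gram4 c a b d = 0" by (rule gram4_eq_0_if_nontrivial_kernel)
  then show ?thesis by (simp add: a_def b_def c_def d_def)
qed

lemma on_gyrocircle_gram4:
  fixes Oc A1 A2 A3 :: "'a::real_inner"
  assumes s: "0 < s" and O: "norm Oc < s" and A1: "norm A1 < s" and A2: "norm A2 < s" and A3: "norm A3 < s"
    and "A1 \<noteq> A2" "A1 \<noteq> A3" "A2 \<noteq> A3"
    and "on_gyrocircle s Oc {A1, A2, A3}"
  shows "Oc \<noteq> A1" "gyrogamma s Oc A2 = gyrogamma s Oc A1" "gyrogamma s Oc A3 = gyrogamma s Oc A1"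
    and "gram4 (gyrogamma s Oc A1) (gyrogamma s A1 A2) (gyrogamma s A1 A3) (gyrogamma s A2 A3) = 0"
proof -
  obtain P1 P2 P3 r where P1: "norm P1 < s" and plane: "{Oc, A1, A2, A3} \<subseteq> gyroplane s P1 P2 P3"
    and r: "gdist s Oc A1 = r" "gdist s Oc A2 = r" "gdist s Oc A3 = r"
    using \<open>on_gyrocircle s Oc _\<close> unfolding on_gyrocircle_def sball_def by auto
  show c2: "gyrogamma s Oc A2 = gyrogamma s Oc A1" and c3: "gyrogamma s Oc A3 = gyrogamma s Oc A1"
    using gyrogamma_eq_if_gdist_eq[OF s O] A1 A2 A3 r by metis+
  have "gyrogamma s Oc A1 \<noteq> 1"
  proof
    assume "gyrogamma s Oc A1 = 1"
    then have "Oc = A1" "Oc = A2" using gyrogamma_eq_1_imp_eq[OF s O] A1 A2 c2 by auto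
    with \<open>A1 \<noteq> A2\<close> show False by simp
  qed
  then have "distinct [Oc, A1, A2, A3]"
    using gyrogamma_self[OF s A1] gyrogamma_self[OF s A2] gyrogamma_self[OF s A3] c2 c3 assms(6-8) by auto
  then show "Oc \<noteq> A1" "gram4 (gyrogamma s Oc A1) (gyrogamma s A1 A2) (gyrogamma s A1 A3) (gyrogamma s A2 A3) = 0"
    using gyroplane_gram4_eq_0[OF s P1 plane _ c2 c3] by auto
qed

lemma on_gyrocircle_gangle_relation:
  fixes Oc A1 A2 A3 :: "'a::real_inner"
  assumes s: "0 < s" and O: "norm Oc < s" and A: "norm A1 < s" "norm A2 < s" "norm A3 < s"
    and "A1 \<noteq> A2" "A1 \<noteq> A3" "A2 \<noteq> A3"
    and "on_gyrocircle s Oc {A1, A2, A3}"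
  shows "gangle s A2 A1 Oc = gangle s A1 A2 Oc"
    and "\<bar>gangle s A1 A2 A3 + gangle s A2 A1 A3 - gangle s A3 A1 A2\<bar> = 2 * gangle s A1 A2 Oc"
proof -
  note circle = on_gyrocircle_gram4[OF s O A assms(6-9)]
  define a where "a = gyrogamma s A1 A2"
  define b where "b = gyrogamma s A1 A3"
  define c where "c = gyrogamma s Oc A1"
  define d where "d = gyrogamma s A2 A3"
  have gt_1: "1 < a" "1 < b" "1 < c" "1 < d"
    using gyrogamma_gt_1[OF s] O A assms(6-8) circle(1) by (auto simp: a_def b_def c_def d_def)
  have "0 \<le> gram3 a b d"
    using gram3_gyrogamma_nonneg[OF s A assms(6,7)] by (simp add: a_def b_def d_def)
  then have base: "\<bar>arccos (gamma_cos a b d) + arccos (gamma_cos a d b) - arccos (gamma_cos b d a)\<bar>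
      = 2 * arccos (gamma_cos a c c)"
    using gram4_eq_0_imp_angle_relation[OF gt_1] circle(4) by (simp add: a_def b_def c_def d_def)
  have "gyrogamma s A2 A1 = a" "gyrogamma s A3 A1 = b" "gyrogamma s A3 A2 = d"
    "gyrogamma s A1 Oc = c" "gyrogamma s A2 Oc = c"
    unfolding a_def b_def c_def d_def using gyrogamma_commute circle(2) by metis+
  then have angles: "gangle s A1 A2 A3 = arccos (gamma_cos a b d)"
    "gangle s A2 A1 A3 = arccos (gamma_cos a d b)" "gangle s A3 A1 A2 = arccos (gamma_cos b d a)"
    "gangle s A1 A2 Oc = arccos (gamma_cos a c c)" "gangle s A2 A1 Oc = arccos (gamma_cos a c c)"
    using O A by (simp_all add: gangle_gamma_cos[OF s] a_def[symmetric] b_def[symmetric]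
        c_def[symmetric] d_def[symmetric])
  show "gangle s A2 A1 Oc = gangle s A1 A2 Oc"
    and "\<bar>gangle s A1 A2 A3 + gangle s A2 A1 A3 - gangle s A3 A1 A2\<bar> = 2 * gangle s A1 A2 Oc"
    unfolding angles by (fact refl base)+
qed

theorem mainTheorem2:
  fixes s :: real and Oc A1 A2 A3 :: "real ^ 'n"
  assumes "s > 0" and "CARD('n) \<ge> 2"
    and "Oc \<in> sball s" and "A1 \<in> sball s" and "A2 \<in> sball s" and "A3 \<in> sball s"
    and "A1 \<noteq> A2" and "A1 \<noteq> A3" and "A2 \<noteq> A3"
    and "on_gyrocircle s Oc {A1, A2, A3}"
  defines "\<theta> \<equiv> gangle s A3 A1 A2"
    and "\<phi> \<equiv> gangle s Oc A1 A2 / 2"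
  shows "sin (\<theta> + gdefect s A1 A2 A3 / 2) = sin (\<phi> + gdefect s A1 A2 Oc / 2)
    \<and> (\<theta> + gdefect s A1 A2 A3 / 2 = \<phi> + gdefect s A1 A2 Oc / 2
       \<or> \<theta> + gdefect s A1 A2 A3 / 2 = pi - (\<phi> + gdefect s A1 A2 Oc / 2))"
proof -
  have "0 < s" "norm Oc < s" "norm A1 < s" "norm A2 < s" "norm A3 < s"
    using assms(1,3-6) by (auto simp: sball_def)
  note rel = on_gyrocircle_gangle_relation[OF this assms(7-10)]
  define p where "p = (gangle s A1 A2 A3 + gangle s A2 A1 A3 - gangle s A3 A1 A2) / 2"
  define \<beta> where "\<beta> = gangle s A1 A2 Oc"
  have "\<theta> + gdefect s A1 A2 A3 / 2 = pi / 2 - p" "\<phi> + gdefect s A1 A2 Oc / 2 = pi / 2 - \<beta>"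
    unfolding \<theta>_def \<phi>_def gdefect_def rel(1) p_def \<beta>_def by (simp_all add: field_simps)
  moreover have "p = \<beta> \<or> p = - \<beta>" using rel(2) by (auto simp: p_def \<beta>_def abs_if split: if_splits)
  ultimately show ?thesis by (auto simp: sin_add sin_diff)
qed

end
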